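(* Let $\ell\geq 1$ be an integer. For integers $0\leq k\leq s\leq \ell$ there are constants $\sigma_{\ell,s,k}$ (depending only on $\ell,s,k$) such that the following holds: for every $\xi\in\mathbb{R}$, $h\in\mathbb{R}\setminus\{0\}$ and $\mathbf{a}=(a_0,\ldots,a_\ell)\in\mathbb{R}^{\ell+1}$, if $q_{\mathbf{a}}$ denotes the unique polynomial of degree at most $\ell$ with $q_{\mathbf{a}}(\xi+ih)=a_i$ for $i=0,\ldots,\ell$, then \[ q_{\mathbf{a}}^{(\ell-s)}(\xi)=h^{s-\ell}\sum_{k=0}^{s}\sigma_{\ell,s,k}\Bigg(\sum_{j=0}^{\ell}(-1)^j\binom{\ell}{j}j^k a_j\Bigg), \] where $q_{\mathbf{a}}^{(\ell-s)}$ denotes the $(\ell-s)$-th derivative.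
   Context: The convention $0^0=1$ is used. *)

theory Defs
  imports Complex_Main "HOL-Computational_Algebra.Polynomial"
begin

end

theory Submission
  imports Defs
begin

(* Put p(x) = q(\<xi> + h x), so that p(j) = a j and q^(m)(\<xi>) = m! coeff p m / h^m; it remains
   to express c_t = coeff p t for t = l - s through the moments
   M_k = \<Sum>j. (-1)^j (l choose j) j^k p(j), k \<le> s.  Expanding p in monomials,
   M_k = \<Sum>t. c_t \<Sum>j. (-1)^j (l choose j) j^(k+t), and these alternating sums (l-th finite
   differences of powers) vanish for exponents below l and equal (-1)^l l! at l.  Hence
   M_k = (-1)^l l! c_(l-k) + (a combination of the c_(l-i), i < k): a triangular system with
   nonzero diagonal, whose solution for c_(l-s) has coefficients depending only on l and s. *)

(* (-1)^l times the l-th forward difference of f at 0 *)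
definition alt_binomial_sum :: "nat \<Rightarrow> (nat \<Rightarrow> 'a::comm_ring_1) \<Rightarrow> 'a" where
  "alt_binomial_sum l f = (\<Sum>j\<le>l. (-1) ^ j * of_nat (l choose j) * f j)"

lemma alt_binomial_sum_Suc:
  "alt_binomial_sum (Suc l) f = alt_binomial_sum l (\<lambda>j. f j - f (Suc j))"
proof -
  define g where "g j = (-1) ^ j * of_nat (l choose j) * f j" for j
  have "alt_binomial_sum (Suc l) f = f 0 + (\<Sum>j\<le>l. (-1) ^ Suc j * of_nat (Suc l choose Suc j) * f (Suc j))"
    unfolding alt_binomial_sum_def by (subst sum.atMost_Suc_shift) simp
  also have "\<dots> = f 0 + (\<Sum>j\<le>l. g (Suc j) - (-1) ^ j * of_nat (l choose j) * f (Suc j))"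
    by (intro arg_cong[where f = "(+) (f 0)"] sum.cong) (simp_all add: g_def algebra_simps)
  also have "\<dots> = f 0 + (\<Sum>j\<le>l. g (Suc j)) - (\<Sum>j\<le>l. (-1) ^ j * of_nat (l choose j) * f (Suc j))"
    by (simp add: sum_subtractf)
  also have "f 0 + (\<Sum>j\<le>l. g (Suc j)) = (\<Sum>j\<le>Suc l. g j)"
    by (subst sum.atMost_Suc_shift) (simp add: g_def)
  also have "\<dots> = (\<Sum>j\<le>l. g j)"
    by (simp add: g_def binomial_eq_0)
  finally show ?thesis
    by (simp add: alt_binomial_sum_def g_def algebra_simps sum_subtractf)
qed

lemma alt_binomial_sum_power:
  assumes "n \<le> l"
  shows "alt_binomial_sum l (\<lambda>j. of_nat j ^ n :: 'a::{comm_ring_1,ring_char_0})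
    = (if n = l then (-1) ^ l * fact l else 0)"
  using assms
proof (induction l arbitrary: n)
  case 0
  then show ?case by (simp add: alt_binomial_sum_def)
next
  case (Suc l)
  have diff: "of_nat j ^ n - of_nat (Suc j) ^ n = - (\<Sum>i<n. of_nat (n choose i) * (of_nat j ^ i :: 'a))" for j
  proof -
    have "(of_nat (Suc j) :: 'a) ^ n = (of_nat j + 1) ^ n"
      by (simp add: add.commute)
    also have "\<dots> = (\<Sum>i\<le>n. of_nat (n choose i) * of_nat j ^ i)"
      by (simp add: binomial_ring)
    finally have "(of_nat (Suc j) :: 'a) ^ n = (\<Sum>i\<le>n. of_nat (n choose i) * of_nat j ^ i)" .
    then show ?thesis
      by (simp add: lessThan_Suc_atMost[symmetric])
  qed
  have "alt_binomial_sum (Suc l) (\<lambda>j. of_nat j ^ n)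
      = alt_binomial_sum l (\<lambda>j. - (\<Sum>i<n. of_nat (n choose i) * (of_nat j ^ i :: 'a)))"
    by (simp only: alt_binomial_sum_Suc diff)
  also have "\<dots> = - (\<Sum>i<n. of_nat (n choose i) * alt_binomial_sum l (\<lambda>j. (of_nat j ^ i :: 'a)))"
    by (simp add: alt_binomial_sum_def sum_distrib_left sum_negf sum.swap[of _ "{..l}"] algebra_simps)
  also have "\<dots> = - (\<Sum>i<n. if i = l then of_nat (n choose i) * ((-1) ^ l * fact l) else 0)"
    using Suc by (intro arg_cong[where f = uminus] sum.cong) auto
  also have "\<dots> = (if n = Suc l then (-1) ^ Suc l * fact (Suc l) else 0)"
    using Suc.prems by (auto simp: algebra_simps)
  finally show ?case .
qed

lemma poly_eq_sum_coeff_atMost: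
  fixes p :: "'a::comm_semiring_1 poly"
  assumes "degree p \<le> n"
  shows "poly p x = (\<Sum>t\<le>n. coeff p t * x ^ t)"
  unfolding poly_altdef using assms
  by (intro sum.mono_neutral_left) (auto simp: coeff_eq_0)

lemma alt_binomial_sum_power_mult_poly:
  fixes p :: "'a::{comm_ring_1,ring_char_0} poly"
  assumes "degree p \<le> l" and "k \<le> l"
  shows "alt_binomial_sum l (\<lambda>j. of_nat j ^ k * poly p (of_nat j))
    = (-1) ^ l * fact l * coeff p (l - k)
      + (\<Sum>i<k. alt_binomial_sum l (\<lambda>j. of_nat j ^ (k + l - i)) * coeff p (l - i))"
proof -
  define S where "S n = alt_binomial_sum l (\<lambda>j. of_nat j ^ n :: 'a)" for n
  have S_vanish: "S n = 0" if "n < l" for n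
    using that by (simp add: S_def alt_binomial_sum_power)
  have "alt_binomial_sum l (\<lambda>j. of_nat j ^ k * poly p (of_nat j))
      = (\<Sum>j\<le>l. \<Sum>t\<le>l. coeff p t * ((-1) ^ j * of_nat (l choose j) * of_nat j ^ (k + t)))"
    by (simp add: alt_binomial_sum_def poly_eq_sum_coeff_atMost[OF assms(1)] sum_distrib_left
        power_add mult_ac)
  also have "\<dots> = (\<Sum>t\<le>l. coeff p t * S (k + t))"
    by (subst sum.swap) (simp add: S_def alt_binomial_sum_def sum_distrib_left)
  also have "\<dots> = (\<Sum>i\<le>l. coeff p (l - i) * S (k + (l - i)))"
    by (rule sum.reindex_bij_witness[where i = "\<lambda>t. l - t" and j = "\<lambda>t. l - t"]) auto
  also have "\<dots> = (\<Sum>i\<le>k. coeff p (l - i) * S (k + (l - i)))"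
  proof (rule sum.mono_neutral_right)
    show "\<forall>i\<in>{..l} - {..k}. coeff p (l - i) * S (k + (l - i)) = 0"
    proof
      fix i
      assume "i \<in> {..l} - {..k}"
      then have "k + (l - i) < l"
        by auto
      then show "coeff p (l - i) * S (k + (l - i)) = 0"
        by (simp add: S_vanish)
    qed
  qed (use assms(2) in auto)
  also have "\<dots> = (\<Sum>i<k. coeff p (l - i) * S (k + l - i)) + coeff p (l - k) * S l"
    using assms(2) by (simp add: lessThan_Suc_atMost[symmetric])
  finally show ?thesis
    by (simp add: S_def alt_binomial_sum_power algebra_simps)
qed

lemma lower_triangular_system_solve:
  fixes L :: "(nat \<Rightarrow> 'a::field) \<Rightarrow> nat \<Rightarrow> 'a"
  assumes L: "\<And>x k. L x k = d * x k + (\<Sum>i<k. A k i * x i)" and "d \<noteq> 0"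
  shows "\<exists>w. \<forall>x. x s = (\<Sum>k\<le>s. w k * L x k)"
proof (induction s rule: less_induct)
  case (less s)
  then have "\<forall>i\<in>{..<s}. \<exists>w. \<forall>x. x i = (\<Sum>k\<le>i. w k * L x k)"
    by blast
  then obtain W where W: "\<forall>i\<in>{..<s}. \<forall>x. x i = (\<Sum>k\<le>i. W i k * L x k)"
    by (rule bchoice[THEN exE])
  define W' where "W' i k = (if k \<le> i then W i k else 0)" for i k
  have W': "x i = (\<Sum>k\<le>s. W' i k * L x k)" if "i < s" for i x
  proof -
    have "(\<Sum>k\<le>s. W' i k * L x k) = (\<Sum>k\<le>i. W i k * L x k)"
      using that by (intro sum.mono_neutral_cong_right) (auto simp: W'_def)
    then show ?thesis
      using W that by simp
  qed
  define w where "w k = ((if k = s then 1 else 0) - (\<Sum>i<s. A s i * W' i k)) / d" for k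
  have dw: "d * w k = (if k = s then 1 else 0) - (\<Sum>i<s. A s i * W' i k)" for k
    using \<open>d \<noteq> 0\<close> by (simp add: w_def)
  have "x s = (\<Sum>k\<le>s. w k * L x k)" for x
  proof -
    have "d * (\<Sum>k\<le>s. w k * L x k)
        = (\<Sum>k\<le>s. ((if k = s then 1 else 0) - (\<Sum>i<s. A s i * W' i k)) * L x k)"
      by (simp add: sum_distrib_left mult.assoc[symmetric] dw)
    also have "\<dots> = L x s - (\<Sum>i<s. A s i * (\<Sum>k\<le>s. W' i k * L x k))"
      by (simp add: left_diff_distrib sum_subtractf sum_distrib_left sum_distrib_right
          sum.swap[of _ "{..<s}"] mult.assoc if_distrib[of "\<lambda>u. u * _"])
    also have "\<dots> = L x s - (\<Sum>i<s. A s i * x i)"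
      using W' by simp
    also have "\<dots> = d * x s"
      using L by simp
    finally show ?thesis
      using \<open>d \<noteq> 0\<close> by simp
  qed
  then show ?case
    by blast
qed

lemma coeff_eq_alt_binomial_moment_combination:
  "\<exists>\<sigma>. \<forall>l s (p :: 'a::field_char_0 poly). s \<le> l \<longrightarrow> degree p \<le> l \<longrightarrow>
     coeff p (l - s) = (\<Sum>k\<le>s. \<sigma> l s k * alt_binomial_sum l (\<lambda>j. of_nat j ^ k * poly p (of_nat j)))"
proof -
  have "\<exists>w. \<forall>p :: 'a poly. degree p \<le> l \<longrightarrow>
      coeff p (l - s) = (\<Sum>k\<le>s. w k * alt_binomial_sum l (\<lambda>j. of_nat j ^ k * poly p (of_nat j)))"
    if "s \<le> l" for l s
  proof -
    \<comment> \<open>unknowns x i = coeff p (l - i), ordered so that the moment system is lower triangular\<close>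
    define L where "L x k = (-1) ^ l * fact l * x k
      + (\<Sum>i<k. alt_binomial_sum l (\<lambda>j. of_nat j ^ (k + l - i)) * x i)" for x :: "nat \<Rightarrow> 'a" and k
    obtain w where w: "\<And>x. x s = (\<Sum>k\<le>s. w k * L x k)"
      using lower_triangular_system_solve[of L, OF L_def] by fastforce
    have "coeff p (l - s) = (\<Sum>k\<le>s. w k * alt_binomial_sum l (\<lambda>j. of_nat j ^ k * poly p (of_nat j)))"
      if "degree p \<le> l" for p :: "'a poly"
      using w[of "\<lambda>i. coeff p (l - i)"] \<open>s \<le> l\<close> that
      by (simp add: L_def alt_binomial_sum_power_mult_poly)
    then show ?thesis
      by blast
  qed
  then show ?thesis
    by (intro choice allI) blast
qed

lemma higher_pderiv_pcompose_linear:
  "(pderiv ^^ m) (pcompose p [:c, d:]) = smult (d ^ m) (pcompose ((pderiv ^^ m) p) [:c, d:])"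
proof (induction m)
  case (Suc m)
  then show ?case
    by (simp add: pderiv_smult pderiv_pcompose pderiv_pCons mult.commute)
qed simp

lemma poly_higher_pderiv_0:
  "poly ((pderiv ^^ m) p) 0 = fact m * coeff p m"
  by (simp add: poly_0_coeff_0 coeff_higher_pderiv pochhammer_fact)

lemma poly_higher_pderiv_eq_coeff_pcompose:
  fixes q :: "'a::field_char_0 poly"
  assumes "h \<noteq> 0"
  shows "poly ((pderiv ^^ m) q) \<xi> = fact m * coeff (pcompose q [:\<xi>, h:]) m / h ^ m"
proof -
  have "h ^ m * poly ((pderiv ^^ m) q) \<xi> = poly ((pderiv ^^ m) (pcompose q [:\<xi>, h:])) 0"
    by (simp add: higher_pderiv_pcompose_linear poly_pcompose)
  also have "\<dots> = fact m * coeff (pcompose q [:\<xi>, h:]) m"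
    by (rule poly_higher_pderiv_0)
  finally show ?thesis
    using assms by (simp add: field_simps)
qed

theorem proposition2:
  shows "\<exists>\<sigma> :: nat \<Rightarrow> nat \<Rightarrow> nat \<Rightarrow> real.
    \<forall>l::nat. l \<ge> 1 \<longrightarrow>
    (\<forall>s \<le> l. \<forall>(\<xi>::real) (h::real) (a::nat \<Rightarrow> real) (q::real poly).
       h \<noteq> 0 \<longrightarrow> degree q \<le> l \<longrightarrow>
       (\<forall>i \<le> l. poly q (\<xi> + real i * h) = a i) \<longrightarrow>
       poly ((pderiv ^^ (l - s)) q) \<xi> =
         h powi (int s - int l) *
         (\<Sum>k = 0..s. \<sigma> l s k *
            (\<Sum>j = 0..l. (-1) ^ j * real (l choose j) * real j ^ k * a j)))"
proof -
  obtain \<sigma> :: "nat \<Rightarrow> nat \<Rightarrow> nat \<Rightarrow> real" where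
    \<sigma>: "\<forall>l s (p :: real poly). s \<le> l \<longrightarrow> degree p \<le> l \<longrightarrow>
      coeff p (l - s) = (\<Sum>k\<le>s. \<sigma> l s k * alt_binomial_sum l (\<lambda>j. of_nat j ^ k * poly p (of_nat j)))"
    using coeff_eq_alt_binomial_moment_combination by (rule exE)
  show ?thesis
  proof (intro exI[of _ "\<lambda>l s k. fact (l - s) * \<sigma> l s k"] allI impI)
    fix l s \<xi> h a and q :: "real poly"
    assume "s \<le> l" "h \<noteq> 0" "degree q \<le> l" and a: "\<forall>i \<le> l. poly q (\<xi> + real i * h) = a i"
    define p where "p = pcompose q [:\<xi>, h:]"
    have "degree p \<le> l"
      using \<open>degree q \<le> l\<close> \<open>h \<noteq> 0\<close> by (simp add: p_def degree_pcompose)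
    have moment: "(\<Sum>j\<le>l. (-1) ^ j * real (l choose j) * real j ^ k * a j)
        = alt_binomial_sum l (\<lambda>j. of_nat j ^ k * poly p (of_nat j))" for k
      using a by (auto simp: alt_binomial_sum_def p_def poly_pcompose atLeast0AtMost algebra_simps
          intro!: sum.cong)
    have "int s - int l = - int (l - s)"
      using \<open>s \<le> l\<close> by simp
    then have powi: "h powi (int s - int l) = inverse (h ^ (l - s))"
      by (simp only: power_int_minus power_int_of_nat)
    have "poly ((pderiv ^^ (l - s)) q) \<xi> = inverse (h ^ (l - s)) * (fact (l - s) * coeff p (l - s))"
      using poly_higher_pderiv_eq_coeff_pcompose[OF \<open>h \<noteq> 0\<close>]
      by (simp add: p_def divide_inverse mult.commute)
    also have "coeff p (l - s) = (\<Sum>k\<le>s. \<sigma> l s k * alt_binomial_sum l (\<lambda>j. of_nat j ^ k * poly p (of_nat j)))"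
      using \<sigma> \<open>s \<le> l\<close> \<open>degree p \<le> l\<close> by simp
    finally show "poly ((pderiv ^^ (l - s)) q) \<xi> = h powi (int s - int l) *
        (\<Sum>k = 0..s. fact (l - s) * \<sigma> l s k *
           (\<Sum>j = 0..l. (-1) ^ j * real (l choose j) * real j ^ k * a j))"
      unfolding powi atLeast0AtMost moment by (simp only: sum_distrib_left mult.assoc)
  qed
qed

end
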